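(* There exist a constant $c_0\in(0,1)$ and a 1-sided error, nonadaptive, $t$-online-erasure-resilient $\varepsilon$-tester for linearity of functions $f:\{0,1\}^d\to\{0,1\}$ that is correct whenever $t\le c_0\cdot\varepsilon\cdot 2^{d/4}$ and makes $O(t/\varepsilon)$ queries.
   Context: Online-erasure model. An input is a function $f:D\to R$ on a finite domain $D$. An algorithm accesses $f$ only through an oracle $\mathcal{O}$ by querying points $x\in D$ one at a time and receiving $\mathcal{O}(x)$. Initially $\mathcal{O}(x)=f(x)$ for all $x\in D$. For $t\in\mathbb{N}$, a $t$-online-erasure oracle, after answering each query, may choose up to $t$ points $x\in D$ and set $\mathcal{O}(x)=\perp$ (a special "erased" symbol); these values are used to answer all future queries. The choice of erasures (the adversarial strategy) may depend on $f$, on the queries and answers so far, and on the algorithm's code, but not on the algorithm's future random coins; the algorithm does not know where erasures are. A property $\mathcal{P}$ is a set of functions; $f$ is $\varepsilon$-far from $\mathcal{P}$ if for every $g\in\mathcal{P}$, $f$ and $g$ differ on at least an $\varepsilon$ fraction of $D$. A $t$-online-erasure-resilient $\varepsilon$-tester for $\mathcal{P}$ is a randomized algorithm that, given $t,\varepsilon$ and access to $f$ via a $t$-online-erasure oracle, for every adversarial strategy accepts with probability at least $2/3$ if $f\in\mathcal{P}$ and rejects with probability at least $2/3$ if $f$ is $\varepsilon$-far from $\mathcal{P}$. It has 1-sided error if it accepts every $f\in\mathcal{P}$ with probability 1; it is nonadaptive if its queries do not depend on answers to previous queries. A function $f:\{0,1\}^d\to\{0,1\}$ is linear if there is $S\subseteq[d]$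 with $f(x)=\sum_{i\in S}x[i]\bmod 2$ for all $x$. *)

theory Defs
  imports "HOL-Probability.Probability"
begin

text \<open>Points of the hypercube are bit lists of length d; a function f : {0,1}^d -> {0,1}
  is represented as a total function on bit lists of which only the values on the
  domain matter.  The erased symbol is None; an unerased answer is Some (f x).\<close>

definition cube :: "nat \<Rightarrow> bool list set" where
  "cube d = {x. length x = d}"

definition is_linear_fn :: "nat \<Rightarrow> (bool list \<Rightarrow> bool) \<Rightarrow> bool" where
  "is_linear_fn d f \<longleftrightarrow>
     (\<exists>S \<subseteq> {..<d}. \<forall>x \<in> cube d. f x = odd (card {i \<in> S. x ! i}))"

definition eps_far_linear :: "real \<Rightarrow> nat \<Rightarrow> (bool list \<Rightarrow> bool) \<Rightarrow> bool" where
  "eps_far_linear \<epsilon> d f \<longleftrightarrow>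
     (\<forall>g. is_linear_fn d g \<longrightarrow> real (card {x \<in> cube d. f x \<noteq> g x}) \<ge> \<epsilon> * 2 ^ d)"

text \<open>An adversary (online-erasure strategy) maps the history of (query, answer) pairs
  seen so far to the set of points it erases after answering the last query.
  It may depend on f and on the algorithm because it is quantified after them.\<close>
type_synonym adversary = "(bool list \<times> bool option) list \<Rightarrow> bool list set"

definition valid_adversary :: "nat \<Rightarrow> adversary \<Rightarrow> bool" where
  "valid_adversary t adv \<longleftrightarrow> (\<forall>h. finite (adv h) \<and> card (adv h) \<le> t)"

fun oracle_run :: "(bool list \<Rightarrow> bool) \<Rightarrow> adversary \<Rightarrow> bool list set \<Rightarrow>
    (bool list \<times> bool option) list \<Rightarrow> bool list list \<Rightarrow> bool option list" where
  "oracle_run f adv E h [] = []"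
| "oracle_run f adv E h (q # qs) =
     (let a = (if q \<in> E then None else Some (f q));
          h' = h @ [(q, a)]
      in a # oracle_run f adv (E \<union> adv h') h' qs)"

definition answers :: "(bool list \<Rightarrow> bool) \<Rightarrow> adversary \<Rightarrow> bool list list \<Rightarrow> bool option list" where
  "answers f adv qs = oracle_run f adv {} [] qs"

text \<open>A nonadaptive randomized algorithm: its random coins determine the full query
  sequence and a decision rule (True = accept) applied to the received answers.\<close>
type_synonym nonadaptive_alg = "(bool list list \<times> (bool option list \<Rightarrow> bool)) pmf"

definition accept_prob :: "nonadaptive_alg \<Rightarrow> (bool list \<Rightarrow> bool) \<Rightarrow> adversary \<Rightarrow> real" where
  "accept_prob A f adv = measure_pmf.prob A {(qs, dec). dec (answers f adv qs)}"

end

theory Submission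
  imports Defs
begin

text \<open>The tester draws \<open>m = \<Theta>(t/\<epsilon>)\<close> uniform points \<open>x\<^sub>1, \<dots>, x\<^sub>m\<close>, queries them, then picks
  \<open>s = \<Theta>(1/\<epsilon>)\<close> disjoint pairs \<open>{a, b}\<close> one at a time, uniformly among the unused ones, and
  queries \<open>x\<^sub>a \<oplus> x\<^sub>b\<close>; it rejects iff some fully answered triple violates
  \<open>f(x\<^sub>a) + f(x\<^sub>b) = f(x\<^sub>a \<oplus> x\<^sub>b)\<close>.  Linear functions are never rejected.  If \<open>f\<close> is
  \<open>\<epsilon>\<close>-far from linear, the BLR theorem makes each pair a violation with probability
  \<open>\<ge> \<epsilon>/12\<close>, so all \<open>s\<close> pairs pass with probability \<open>\<le> 1/6\<close>.  The adversary can spoil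
  this only by erasing a point \<open>x\<^sub>j\<close> before it is queried (each point is fresh and uniform,
  so this costs \<open>m \<cdot> tm/2\<^sup>d\<close>) or by erasing a sum before it is queried.  Unless two
  different pairs have the same sum (probability \<open>\<le> m\<^sup>4/2\<^sup>d\<close>), at most \<open>2\<cdot>|erased|\<close>
  pairs have an erased sum, and the pair is chosen among \<open>\<Omega>(m\<^sup>2)\<close> free pairs, so each
  step fails with probability \<open>O(t/m)\<close>.  The condition \<open>t \<le> c\<^sub>0 \<epsilon> 2\<^sup>d\<^sup>/\<^sup>4\<close> makes
  \<open>m\<^sup>4 = O(2\<^sup>d)\<close>, so all error terms are small constants.\<close>

section \<open>Bounds for discrete probability\<close>

lemma measure_pmf_bind_le_add:
  fixes M :: "'a pmf" and N :: "'a \<Rightarrow> 'b pmf"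
  assumes "\<And>x. x \<in> set_pmf M \<Longrightarrow> x \<notin> B \<Longrightarrow> measure_pmf.prob (N x) A \<le> c" "0 \<le> c"
  shows "measure_pmf.prob (bind_pmf M N) A \<le> measure_pmf.prob M B + c"
proof -
  have "emeasure (bind_pmf M N) A = (\<integral>\<^sup>+x. emeasure (N x) A \<partial>M)" by simp
  also have "\<dots> \<le> (\<integral>\<^sup>+x. (indicator B x + ennreal c) \<partial>M)"
  proof (rule nn_integral_mono_AE, rule AE_pmfI)
    fix x assume x: "x \<in> set_pmf M"
    show "emeasure (measure_pmf (N x)) A \<le> indicator B x + ennreal c"
    proof (cases "x \<in> B")
      case True
      have "emeasure (measure_pmf (N x)) A \<le> 1" by (simp add: measure_pmf.emeasure_le_1)
      then show ?thesis using True by (simp add: add_increasing2)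
    next
      case False
      then show ?thesis using assms(1)[OF x False]
        by (simp add: measure_pmf.emeasure_eq_measure ennreal_leI)
    qed
  qed
  also have "\<dots> = ennreal (measure_pmf.prob M B + c)"
    using assms(2)
    by (subst nn_integral_add) (auto simp: measure_pmf.emeasure_eq_measure ennreal_plus)
  finally have "ennreal (measure_pmf.prob (bind_pmf M N) A) \<le> ennreal (measure_pmf.prob M B + c)"
    by (simp add: measure_pmf.emeasure_eq_measure)
  then show ?thesis
    using assms(2) by (metis add_nonneg_nonneg ennreal_le_iff measure_nonneg)
qed

lemma measure_pmf_bind_le:
  fixes M :: "'a pmf" and N :: "'a \<Rightarrow> 'b pmf"
  assumes "\<And>x. x \<in> set_pmf M \<Longrightarrow> measure_pmf.prob (N x) A \<le> c"
  shows "measure_pmf.prob (bind_pmf M N) A \<le> c"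
proof -
  obtain x where "x \<in> set_pmf M" using set_pmf_not_empty[of M] by blast
  then have "0 \<le> c" using assms measure_nonneg order_trans by blast
  then show ?thesis
    using measure_pmf_bind_le_add[of M "{}" N A c] assms by simp
qed

lemma measure_pmf_bind_le_mult:
  fixes M :: "'a pmf" and N :: "'a \<Rightarrow> 'b pmf"
  assumes "\<And>x. x \<in> set_pmf M \<Longrightarrow> x \<in> B \<Longrightarrow> measure_pmf.prob (N x) A \<le> c"
    and "\<And>x. x \<in> set_pmf M \<Longrightarrow> x \<notin> B \<Longrightarrow> measure_pmf.prob (N x) A = 0" and "0 \<le> c"
  shows "measure_pmf.prob (bind_pmf M N) A \<le> c * measure_pmf.prob M B"
proof -
  have "emeasure (bind_pmf M N) A = (\<integral>\<^sup>+x. emeasure (N x) A \<partial>M)" by simp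
  also have "\<dots> \<le> (\<integral>\<^sup>+x. ennreal c * indicator B x \<partial>M)"
  proof (rule nn_integral_mono_AE, rule AE_pmfI)
    fix x assume x: "x \<in> set_pmf M"
    show "emeasure (measure_pmf (N x)) A \<le> ennreal c * indicator B x"
      using assms(1)[OF x] assms(2)[OF x]
      by (cases "x \<in> B") (auto simp: measure_pmf.emeasure_eq_measure ennreal_leI)
  qed
  also have "\<dots> = ennreal (c * measure_pmf.prob M B)"
    using assms(3)
    by (simp add: nn_integral_cmult_indicator measure_pmf.emeasure_eq_measure ennreal_mult)
  finally show ?thesis
    using assms(3) by (simp add: measure_pmf.emeasure_eq_measure)
qed

lemma measure_pmf_mono_on_support:
  assumes "\<And>x. x \<in> set_pmf M \<Longrightarrow> x \<in> A \<Longrightarrow> x \<in> B"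
  shows "measure_pmf.prob M A \<le> measure_pmf.prob M B"
  by (rule measure_pmf.finite_measure_mono_AE) (auto simp: AE_measure_pmf_iff assms)

lemma pair_pmf_conv_bind_left: "pair_pmf A B = bind_pmf A (\<lambda>x. map_pmf (Pair x) B)"
  by (simp add: pair_pmf_def map_pmf_def)

lemma pair_pmf_conv_bind_right: "pair_pmf A B = bind_pmf B (\<lambda>y. map_pmf (\<lambda>x. (x, y)) A)"
  by (simp add: pair_pmf_def map_pmf_def) (rule bind_commute_pmf)


section \<open>Bit vectors and linear functions\<close>

definition xor_bits :: "bool list \<Rightarrow> bool list \<Rightarrow> bool list" where
  "xor_bits x y = map2 (\<noteq>) x y"

lemma length_xor_bits [simp]: "length (xor_bits x y) = min (length x) (length y)"
  by (simp add: xor_bits_def)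

lemma nth_xor_bits [simp]:
  "i < length x \<Longrightarrow> i < length y \<Longrightarrow> xor_bits x y ! i = (x ! i \<noteq> y ! i)"
  by (simp add: xor_bits_def)

lemma xor_bits_in_cube [intro]: "x \<in> cube d \<Longrightarrow> y \<in> cube d \<Longrightarrow> xor_bits x y \<in> cube d"
  by (simp add: cube_def)

lemma xor_bits_commute: "xor_bits x y = xor_bits y x"
  by (rule nth_equalityI) auto

lemma xor_bits_assoc: "xor_bits (xor_bits x y) z = xor_bits x (xor_bits y z)"
  by (rule nth_equalityI) auto

lemma xor_bits_left_cancel: "length a = length y \<Longrightarrow> xor_bits a (xor_bits a y) = y"
  by (rule nth_equalityI) auto

lemma xor_bits_right_cancel: "length a = length y \<Longrightarrow> xor_bits (xor_bits y a) a = y"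
  by (rule nth_equalityI) auto

lemma xor_bits_left_commute: "xor_bits x (xor_bits y z) = xor_bits y (xor_bits x z)"
  by (metis xor_bits_assoc xor_bits_commute)

lemma inj_on_xor_bits: "a \<in> cube d \<Longrightarrow> inj_on (xor_bits a) (cube d)"
  unfolding inj_on_def cube_def by (metis mem_Collect_eq xor_bits_left_cancel)

lemma finite_cube [simp]: "finite (cube d)"
  unfolding cube_def using finite_lists_length_eq[of "UNIV :: bool set" d] by simp

lemma card_cube: "card (cube d) = 2 ^ d"
  unfolding cube_def using card_lists_length_eq[of "UNIV :: bool set" d] by simp

lemma cube_nonempty [simp]: "cube d \<noteq> {}"
  using card_cube[of d] by auto


lemma odd_card_symmetric_difference:
  assumes "finite A" "finite B"
  shows "odd (card {i. (i \<in> A) \<noteq> (i \<in> B)}) = (odd (card A) \<noteq> odd (card B))"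
proof -
  have "{i. (i \<in> A) \<noteq> (i \<in> B)} = (A - B) \<union> (B - A)" by auto
  moreover have "card ((A - B) \<union> (B - A)) = card (A - B) + card (B - A)"
    by (rule card_Un_disjoint) (use assms in auto)
  moreover have "card A = card (A - B) + card (A \<inter> B)"
    using assms by (metis Diff_Diff_Int card_Diff_subset_Int card_mono Int_lower1 le_add_diff_inverse2
        finite_Int inf_commute card_Diff_subset)
  moreover have "card B = card (B - A) + card (A \<inter> B)"
    using assms by (metis Int_commute Diff_Diff_Int card_Diff_subset_Int card_mono Int_lower1
        le_add_diff_inverse2 finite_Int card_Diff_subset)
  ultimately show ?thesis by auto
qed

lemma is_linear_fn_xor_bits:
  assumes "is_linear_fn d f" "x \<in> cube d" "y \<in> cube d"
  shows "f (xor_bits x y) = (f x \<noteq> f y)"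
proof -
  obtain S where S: "S \<subseteq> {..<d}" "\<forall>x\<in>cube d. f x = odd (card {i \<in> S. x ! i})"
    using assms(1) unfolding is_linear_fn_def by blast
  have "finite S" using S(1) finite_subset by blast
  have "{i \<in> S. xor_bits x y ! i} = {i. (i \<in> {i \<in> S. x ! i}) \<noteq> (i \<in> {i \<in> S. y ! i})}"
    using S(1) assms(2,3) by (auto simp: cube_def)
  then have "f (xor_bits x y) = odd (card {i. (i \<in> {i \<in> S. x ! i}) \<noteq> (i \<in> {i \<in> S. y ! i})})"
    using S(2) assms xor_bits_in_cube by simp
  also have "\<dots> = (f x \<noteq> f y)"
    using \<open>finite S\<close> S(2) assms by (subst odd_card_symmetric_difference) auto
  finally show ?thesis .
qed

definition unit_bits :: "nat \<Rightarrow> nat \<Rightarrow> bool list" where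
  "unit_bits d i = map (\<lambda>j. j = i) [0..<d]"

definition prefix_bits :: "nat \<Rightarrow> bool list \<Rightarrow> bool list" where
  "prefix_bits k x = map (\<lambda>j. x ! j \<and> j < k) [0..<length x]"

lemma additive_fn_prefix_bits:
  assumes add: "\<And>a b. a \<in> cube d \<Longrightarrow> b \<in> cube d \<Longrightarrow> g (xor_bits a b) = (g a \<noteq> g b)"
    and x: "x \<in> cube d" and "k \<le> d"
  shows "g (prefix_bits k x) = odd (card {i. i < k \<and> x ! i \<and> g (unit_bits d i)})"
  using \<open>k \<le> d\<close>
proof (induction k)
  case 0
  have zero: "replicate d False \<in> cube d" by (simp add: cube_def)
  have "xor_bits (replicate d False) (replicate d False) = replicate d False"
    by (rule nth_equalityI) auto
  then have "g (replicate d False) = False" using add[OF zero zero] by simp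
  moreover have "prefix_bits 0 x = replicate d False"
    using x by (auto simp: prefix_bits_def cube_def intro: nth_equalityI)
  ultimately show ?case by simp
next
  case (Suc k)
  have len: "length x = d" using x by (simp add: cube_def)
  let ?I = "\<lambda>k. {i. i < k \<and> x ! i \<and> g (unit_bits d i)}"
  show ?case
  proof (cases "x ! k")
    case True
    have "prefix_bits (Suc k) x = xor_bits (prefix_bits k x) (unit_bits d k)"
      using Suc.prems len True by (auto simp: prefix_bits_def unit_bits_def intro!: nth_equalityI)
    moreover have "prefix_bits k x \<in> cube d" "unit_bits d k \<in> cube d"
      using len by (simp_all add: prefix_bits_def unit_bits_def cube_def)
    ultimately have step: "g (prefix_bits (Suc k) x) = (g (prefix_bits k x) \<noteq> g (unit_bits d k))"
      using add by simp
    have "?I (Suc k) = (if g (unit_bits d k) then insert k (?I k) else ?I k)"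
      using True by (auto simp: less_Suc_eq)
    then show ?thesis using step Suc by simp
  next
    case False
    have "prefix_bits (Suc k) x = prefix_bits k x"
      using False by (auto simp: prefix_bits_def less_Suc_eq intro!: nth_equalityI)
    moreover have "?I (Suc k) = ?I k" using False by (auto simp: less_Suc_eq)
    ultimately show ?thesis using Suc by simp
  qed
qed

lemma is_linear_fnI_xor_bits:
  assumes "\<And>a b. a \<in> cube d \<Longrightarrow> b \<in> cube d \<Longrightarrow> g (xor_bits a b) = (g a \<noteq> g b)"
  shows "is_linear_fn d g"
  unfolding is_linear_fn_def
proof (intro exI[of _ "{i. i < d \<and> g (unit_bits d i)}"] conjI ballI)
  fix x assume x: "x \<in> cube d"
  have "prefix_bits d x = x" using x by (auto simp: prefix_bits_def cube_def intro!: nth_equalityI)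
  moreover have "g (prefix_bits d x) = odd (card {i. i < d \<and> x ! i \<and> g (unit_bits d i)})"
    by (rule additive_fn_prefix_bits[OF assms x order_refl])
  moreover have "{i. i < d \<and> x ! i \<and> g (unit_bits d i)} = {i \<in> {i. i < d \<and> g (unit_bits d i)}. x ! i}"
    by auto
  ultimately show "g x = odd (card {i \<in> {i. i < d \<and> g (unit_bits d i)}. x ! i})"
    by simp
qed auto


section \<open>The BLR test\<close>

definition blr_passes :: "(bool list \<Rightarrow> bool) \<Rightarrow> bool list \<Rightarrow> bool list \<Rightarrow> bool" where
  "blr_passes f x y \<longleftrightarrow> (f x \<noteq> f y) = f (xor_bits x y)"

definition blr_rejected :: "(bool list \<Rightarrow> bool) \<Rightarrow> nat \<Rightarrow> (bool list \<times> bool list) set" where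
  "blr_rejected f d = {(x, y) \<in> cube d \<times> cube d. \<not> blr_passes f x y}"

lemma blr_rejected_subset: "blr_rejected f d \<subseteq> cube d \<times> cube d"
  by (auto simp: blr_rejected_def)

lemma finite_blr_rejected [simp]: "finite (blr_rejected f d)"
  by (rule finite_subset[OF blr_rejected_subset]) simp

text \<open>Majority decoding: \<open>g(a)\<close> is the majority over \<open>y\<close> of the votes \<open>f(a \<oplus> y) + f(y)\<close>.
  A vote against \<open>g(a)\<close> together with a vote for it yields a rejected pair up to a translation,
  so the minority of each row is small.  If fewer than \<open>1/12\<close> of all pairs are rejected,
  the rows of \<open>a\<close>, \<open>b\<close> and \<open>a \<oplus> b\<close> share a \<open>y\<close> voting with the majority, which makes \<open>g\<close>
  additive; and \<open>f(a) \<noteq> g(a)\<close> forces half of the row of \<open>a\<close> to be rejected.\<close>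

context
  fixes f :: "bool list \<Rightarrow> bool" and d :: nat
begin

private definition vote :: "bool list \<Rightarrow> bool list \<Rightarrow> bool" where
  "vote a y \<longleftrightarrow> f (xor_bits a y) \<noteq> f y"

private definition majority :: "bool list \<Rightarrow> bool" where
  "majority a \<longleftrightarrow> card (cube d) \<le> 2 * card {y \<in> cube d. vote a y}"

private lemma blr_passes_iff_vote: "blr_passes f x y \<longleftrightarrow> vote x y = f x"
  unfolding blr_passes_def vote_def by auto

private lemma card_minority_le_half: "2 * card {y \<in> cube d. vote a y \<noteq> majority a} \<le> card (cube d)"
proof (cases "majority a")
  case True
  have "{y \<in> cube d. vote a y \<noteq> majority a} = cube d - {y \<in> cube d. vote a y}" using True by auto
  then have "card {y \<in> cube d. vote a y \<noteq> majority a} = card (cube d) - card {y \<in> cube d. vote a y}"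
    by (simp add: card_Diff_subset)
  then show ?thesis using True unfolding majority_def by simp
next
  case False
  have "{y \<in> cube d. vote a y \<noteq> majority a} = {y \<in> cube d. vote a y}" using False by auto
  then show ?thesis using False unfolding majority_def by simp
qed

private lemma card_disagree_majority_le:
  "card {x \<in> cube d. f x \<noteq> majority x} * card (cube d) \<le> 2 * card (blr_rejected f d)"
proof -
  let ?V = "cube d"
  let ?W = "{x \<in> ?V. f x \<noteq> majority x}"
  have "blr_rejected f d = Sigma ?V (\<lambda>x. {y \<in> ?V. vote x y \<noteq> f x})"
    unfolding blr_rejected_def by (auto simp: blr_passes_iff_vote)
  then have rows: "card (blr_rejected f d) = (\<Sum>x\<in>?V. card {y \<in> ?V. vote x y \<noteq> f x})"
    by (simp add: card_SigmaI)
  have "card ?W * card ?V = (\<Sum>x\<in>?W. card ?V)" by simp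
  also have "\<dots> \<le> (\<Sum>x\<in>?W. 2 * card {y \<in> ?V. vote x y \<noteq> f x})"
  proof (rule sum_mono)
    fix x assume x: "x \<in> ?W"
    have "{y \<in> ?V. vote x y \<noteq> f x} = ?V - {y \<in> ?V. vote x y \<noteq> majority x}" using x by auto
    then have "card {y \<in> ?V. vote x y \<noteq> f x} = card ?V - card {y \<in> ?V. vote x y \<noteq> majority x}"
      by (simp add: card_Diff_subset)
    then show "card ?V \<le> 2 * card {y \<in> ?V. vote x y \<noteq> f x}"
      using card_minority_le_half[of x] by simp
  qed
  also have "\<dots> \<le> (\<Sum>x\<in>?V. 2 * card {y \<in> ?V. vote x y \<noteq> f x})"
    by (rule sum_mono2) auto
  also have "\<dots> = 2 * card (blr_rejected f d)" using rows by (simp add: sum_distrib_left)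
  finally show ?thesis .
qed

private lemma card_rejected_translate_left_le:
  assumes "a \<in> cube d"
  shows "card {(y, z) \<in> cube d \<times> cube d. \<not> blr_passes f (xor_bits a y) z} \<le> card (blr_rejected f d)"
proof (rule card_inj_on_le[where f = "\<lambda>(y, z). (xor_bits a y, z)"])
  show "inj_on (\<lambda>(y, z). (xor_bits a y, z)) {(y, z) \<in> cube d \<times> cube d. \<not> blr_passes f (xor_bits a y) z}"
    using assms by (auto simp: inj_on_def cube_def) (metis xor_bits_left_cancel)
  show "(\<lambda>(y, z). (xor_bits a y, z)) ` {(y, z) \<in> cube d \<times> cube d. \<not> blr_passes f (xor_bits a y) z} \<subseteq> blr_rejected f d"
    using assms by (auto simp: blr_rejected_def)
qed simp

private lemma card_rejected_translate_right_le:
  assumes "a \<in> cube d"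
  shows "card {(y, z) \<in> cube d \<times> cube d. \<not> blr_passes f y (xor_bits a z)} \<le> card (blr_rejected f d)"
proof (rule card_inj_on_le[where f = "\<lambda>(y, z). (y, xor_bits a z)"])
  show "inj_on (\<lambda>(y, z). (y, xor_bits a z)) {(y, z) \<in> cube d \<times> cube d. \<not> blr_passes f y (xor_bits a z)}"
    using assms by (auto simp: inj_on_def cube_def) (metis xor_bits_left_cancel)
  show "(\<lambda>(y, z). (y, xor_bits a z)) ` {(y, z) \<in> cube d \<times> cube d. \<not> blr_passes f y (xor_bits a z)} \<subseteq> blr_rejected f d"
    using assms by (auto simp: blr_rejected_def)
qed simp

private lemma card_minority_le_rejected:
  assumes a: "a \<in> cube d"
  shows "card {y \<in> cube d. vote a y \<noteq> majority a} * card (cube d) \<le> 4 * card (blr_rejected f d)"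
proof -
  let ?V = "cube d"
  let ?P = "{y \<in> ?V. vote a y \<noteq> majority a}"
  let ?Q = "{y \<in> ?V. vote a y = majority a}"
  let ?L = "{(y, z) \<in> ?V \<times> ?V. \<not> blr_passes f (xor_bits a y) z}"
  let ?R = "{(y, z) \<in> ?V \<times> ?V. \<not> blr_passes f y (xor_bits a z)}"
  have "?Q = ?V - ?P" by auto
  then have "card ?Q = card ?V - card ?P" by (simp add: card_Diff_subset)
  then have half: "card ?V \<le> 2 * card ?Q" using card_minority_le_half[of a] by simp
  have "?P \<times> ?Q \<subseteq> ?L \<union> ?R"
  proof
    fix p assume "p \<in> ?P \<times> ?Q"
    then obtain y z where p: "p = (y, z)" "y \<in> ?V" "z \<in> ?V" "vote a y \<noteq> vote a z" by auto
    have "xor_bits (xor_bits a y) z = xor_bits y (xor_bits a z)"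
      by (simp add: xor_bits_assoc xor_bits_left_commute)
    then have "\<not> blr_passes f (xor_bits a y) z \<or> \<not> blr_passes f y (xor_bits a z)"
      using p(4) unfolding blr_passes_def vote_def by auto
    then show "p \<in> ?L \<union> ?R" using p by auto
  qed
  then have "card (?P \<times> ?Q) \<le> card (?L \<union> ?R)"
    by (rule card_mono[rotated]) (rule finite_subset[of _ "?V \<times> ?V"], auto)
  then have "card ?P * card ?Q \<le> card (?L \<union> ?R)"
    by (simp add: card_cartesian_product)
  also have "\<dots> \<le> 2 * card (blr_rejected f d)"
    using card_Un_le[of ?L ?R] card_rejected_translate_left_le[OF a] card_rejected_translate_right_le[OF a]
    by linarith
  finally have "card ?P * card ?Q \<le> 2 * card (blr_rejected f d)" .
  moreover have "card ?P * card ?V \<le> 2 * (card ?P * card ?Q)"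
    using mult_left_mono[OF half, of "card ?P"] by (simp add: algebra_simps)
  ultimately show ?thesis by linarith
qed

private lemma majority_xor_bits:
  assumes few: "12 * card (blr_rejected f d) < card (cube d) * card (cube d)"
    and a: "a \<in> cube d" and b: "b \<in> cube d"
  shows "majority (xor_bits a b) = (majority a \<noteq> majority b)"
proof -
  let ?V = "cube d"
  let ?S1 = "{y \<in> ?V. vote a y \<noteq> majority a}"
  let ?S2 = "{y \<in> ?V. vote b (xor_bits a y) \<noteq> majority b}"
  let ?S3 = "{y \<in> ?V. vote (xor_bits a b) y \<noteq> majority (xor_bits a b)}"
  have "card ?S2 \<le> card {y \<in> ?V. vote b y \<noteq> majority b}"
    by (rule card_inj_on_le[where f = "xor_bits a"])
      (use a in \<open>auto intro: inj_on_subset[OF inj_on_xor_bits]\<close>)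
  then have "card ?S2 * card ?V \<le> 4 * card (blr_rejected f d)"
    using card_minority_le_rejected[OF b] mult_right_mono order_trans by blast
  moreover have "card ?S1 * card ?V \<le> 4 * card (blr_rejected f d)"
    "card ?S3 * card ?V \<le> 4 * card (blr_rejected f d)"
    using card_minority_le_rejected a b by blast+
  ultimately have "card ?S1 * card ?V + card ?S2 * card ?V + card ?S3 * card ?V < card ?V * card ?V"
    using few by linarith
  moreover have "card (?S1 \<union> ?S2 \<union> ?S3) * card ?V \<le> (card ?S1 + card ?S2 + card ?S3) * card ?V"
    by (intro mult_right_mono) (meson add_mono card_Un_le order_trans le_refl | simp)+
  moreover have "(card ?S1 + card ?S2 + card ?S3) * card ?V
      = card ?S1 * card ?V + card ?S2 * card ?V + card ?S3 * card ?V"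
    by (simp add: algebra_simps)
  ultimately have "card (?S1 \<union> ?S2 \<union> ?S3) * card ?V < card ?V * card ?V"
    by linarith
  then have "card (?S1 \<union> ?S2 \<union> ?S3) < card ?V"
    using mult_less_cancel2 by blast
  then have "\<not> ?V \<subseteq> ?S1 \<union> ?S2 \<union> ?S3"
    by (metis (no_types, lifting) card_mono finite_Un finite_cube leD finite_subset mem_Collect_eq subsetI)
  then obtain y where "y \<in> ?V" "y \<notin> ?S1" "y \<notin> ?S2" "y \<notin> ?S3" by blast
  moreover have "xor_bits b (xor_bits a y) = xor_bits (xor_bits a b) y"
    by (metis xor_bits_assoc xor_bits_commute)
  ultimately show ?thesis unfolding vote_def by auto
qed

theorem blr_card_rejected_ge:
  assumes far: "eps_far_linear \<epsilon> d f" and "\<epsilon> \<le> 1"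
  shows "\<epsilon> / 12 * real (card (cube d)) ^ 2 \<le> real (card (blr_rejected f d))"
proof (rule ccontr)
  let ?N = "real (card (cube d))"
  assume "\<not> ?thesis"
  then have few: "real (card (blr_rejected f d)) < \<epsilon> / 12 * ?N ^ 2" by simp
  moreover have "\<epsilon> / 12 * ?N ^ 2 \<le> 1 / 12 * ?N ^ 2"
    using \<open>\<epsilon> \<le> 1\<close> by (intro mult_right_mono) auto
  ultimately have "real (12 * card (blr_rejected f d)) < real (card (cube d) * card (cube d))"
    by (simp add: power2_eq_square)
  then have "12 * card (blr_rejected f d) < card (cube d) * card (cube d)"
    by (simp only: of_nat_less_iff)
  then have "is_linear_fn d majority"
    using majority_xor_bits by (blast intro: is_linear_fnI_xor_bits)
  then have "\<epsilon> * ?N \<le> real (card {x \<in> cube d. f x \<noteq> majority x})"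
    using far unfolding eps_far_linear_def by (simp add: card_cube)
  then have "\<epsilon> * ?N * ?N \<le> real (card {x \<in> cube d. f x \<noteq> majority x}) * ?N"
    by (intro mult_right_mono) auto
  also have "\<dots> \<le> 2 * real (card (blr_rejected f d))"
    using card_disagree_majority_le by (metis of_nat_le_iff of_nat_mult of_nat_numeral)
  finally have "\<epsilon> / 2 * ?N ^ 2 \<le> real (card (blr_rejected f d))"
    by (simp add: power2_eq_square)
  with few have "\<epsilon> * ?N ^ 2 < 0" by (simp add: field_simps)
  then have "\<epsilon> < 0" by (simp add: mult_less_0_iff)
  then have "\<epsilon> / 12 * ?N ^ 2 \<le> 0" by (intro mult_nonpos_nonneg) auto
  with few show False by simp
qed

end


section \<open>Uniform points and sum collisions\<close>

definition unif_cube :: "nat \<Rightarrow> bool list pmf" where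
  "unif_cube d = pmf_of_set (cube d)"

definition unif_points :: "nat \<Rightarrow> nat \<Rightarrow> (nat \<Rightarrow> bool list) pmf" where
  "unif_points d m = Pi_pmf {..<m} [] (\<lambda>_. unif_cube d)"

lemma set_pmf_unif_cube [simp]: "set_pmf (unif_cube d) = cube d"
  unfolding unif_cube_def by simp

lemma unif_points_in_cube: "x \<in> set_pmf (unif_points d m) \<Longrightarrow> j < m \<Longrightarrow> x j \<in> cube d"
  unfolding unif_points_def by (auto simp: set_Pi_pmf PiE_dflt_def)

lemma measure_unif_cube_le:
  assumes "finite G"
  shows "measure_pmf.prob (unif_cube d) G \<le> real (card G) / 2 ^ d"
proof -
  have "card (cube d \<inter> G) \<le> card G" using assms by (simp add: card_mono)
  then show ?thesis
    unfolding unif_cube_def by (simp add: measure_pmf_of_set card_cube divide_right_mono)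
qed

lemma unif_points_resample:
  assumes "i < m"
  shows "unif_points d m = bind_pmf (Pi_pmf ({..<m} - {i}) [] (\<lambda>_. unif_cube d))
           (\<lambda>x. map_pmf (\<lambda>y. x(i := y)) (unif_cube d))"
proof -
  have split: "{..<m} = insert i ({..<m} - {i})" using assms by auto
  have "unif_points d m = do {y \<leftarrow> unif_cube d; x \<leftarrow> Pi_pmf ({..<m} - {i}) [] (\<lambda>_. unif_cube d);
      return_pmf (x(i := y))}"
    unfolding unif_points_def by (subst split, subst Pi_pmf_insert') auto
  also have "\<dots> = bind_pmf (Pi_pmf ({..<m} - {i}) [] (\<lambda>_. unif_cube d))
      (\<lambda>x. map_pmf (\<lambda>y. x(i := y)) (unif_cube d))"
    by (subst bind_commute_pmf) (simp add: map_pmf_def)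
  finally show ?thesis .
qed

lemma measure_unif_points_fresh_le:
  assumes "i < m"
    and determined: "\<And>x y. (\<And>j. j \<noteq> i \<Longrightarrow> x j = y j) \<Longrightarrow> G x = G y"
    and "\<And>x. finite (G x)" and "\<And>x. card (G x) \<le> K"
    and "\<And>x. x \<in> set_pmf (unif_points d m) \<Longrightarrow> x \<in> E \<Longrightarrow> x i \<in> G x"
  shows "measure_pmf.prob (unif_points d m) E \<le> real K / 2 ^ d"
proof -
  have "measure_pmf.prob (unif_points d m) E \<le> measure_pmf.prob (unif_points d m) {x. x i \<in> G x}"
    by (rule measure_pmf_mono_on_support) (use assms(5) in auto)
  also have "\<dots> \<le> real K / 2 ^ d"
    unfolding unif_points_resample[OF \<open>i < m\<close>]
  proof (rule measure_pmf_bind_le)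
    fix x
    have "{y. y \<in> G (x(i := y))} = G x"
      using determined[of "x(i := _)" x] by auto
    then have "measure_pmf.prob (map_pmf (\<lambda>y. x(i := y)) (unif_cube d)) {x. x i \<in> G x}
        = measure_pmf.prob (unif_cube d) (G x)" by simp
    also have "\<dots> \<le> real (card (G x)) / 2 ^ d"
      by (rule measure_unif_cube_le) (rule assms(3))
    also have "\<dots> \<le> real K / 2 ^ d"
      using assms(4)[of x] by (simp add: divide_right_mono)
    finally show "measure_pmf.prob (map_pmf (\<lambda>y. x(i := y)) (unif_cube d)) {x. x i \<in> G x}
        \<le> real K / 2 ^ d" .
  qed
  finally show ?thesis .
qed


definition sum_collision :: "nat \<Rightarrow> (nat \<Rightarrow> bool list) \<Rightarrow> bool" where
  "sum_collision m x \<longleftrightarrow> (\<exists>a<m. \<exists>b<m. \<exists>c<m. \<exists>e<m. a \<noteq> b \<and> c \<noteq> e \<and> {a, b} \<noteq> {c, e} \<and>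
      xor_bits (x a) (x b) = xor_bits (x c) (x e))"

lemma measure_sum_collision_pair_le:
  assumes "a < m" "b < m" "c < m" "e < m" "a \<noteq> b" "c \<noteq> e" "{a, b} \<noteq> {c, e}"
  shows "measure_pmf.prob (unif_points d m) {x. xor_bits (x a) (x b) = xor_bits (x c) (x e)} \<le> 1 / 2 ^ d"
proof (cases "a \<noteq> c \<and> a \<noteq> e")
  case True
  have "measure_pmf.prob (unif_points d m) {x. xor_bits (x a) (x b) = xor_bits (x c) (x e)} \<le> real 1 / 2 ^ d"
  proof (rule measure_unif_points_fresh_le[where i = a and G = "\<lambda>x. {xor_bits (xor_bits (x c) (x e)) (x b)}"])
    fix x assume x: "x \<in> set_pmf (unif_points d m)"
      and "x \<in> {x. xor_bits (x a) (x b) = xor_bits (x c) (x e)}"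
    moreover have "x a = xor_bits (xor_bits (x a) (x b)) (x b)"
      using unif_points_in_cube[OF x] assms by (simp add: xor_bits_right_cancel cube_def)
    ultimately show "x a \<in> {xor_bits (xor_bits (x c) (x e)) (x b)}" by simp
  qed (use assms True in auto)
  then show ?thesis by simp
next
  case False
  then have "b \<noteq> a \<and> b \<noteq> c \<and> b \<noteq> e" using assms by auto
  have "measure_pmf.prob (unif_points d m) {x. xor_bits (x a) (x b) = xor_bits (x c) (x e)} \<le> real 1 / 2 ^ d"
  proof (rule measure_unif_points_fresh_le[where i = b and G = "\<lambda>x. {xor_bits (x a) (xor_bits (x c) (x e))}"])
    fix x assume x: "x \<in> set_pmf (unif_points d m)"
      and "x \<in> {x. xor_bits (x a) (x b) = xor_bits (x c) (x e)}"
    moreover have "x b = xor_bits (x a) (xor_bits (x a) (x b))"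
      using unif_points_in_cube[OF x] assms by (simp add: xor_bits_left_cancel cube_def)
    ultimately show "x b \<in> {xor_bits (x a) (xor_bits (x c) (x e))}" by simp
  qed (use assms \<open>b \<noteq> a \<and> b \<noteq> c \<and> b \<noteq> e\<close> in auto)
  then show ?thesis by simp
qed

lemma measure_sum_collision_le:
  "measure_pmf.prob (unif_points d m) {x. sum_collision m x} \<le> real m ^ 4 / 2 ^ d"
proof -
  define Q where "Q = {(a, b, c, e). a < m \<and> b < m \<and> c < m \<and> e < m \<and> a \<noteq> b \<and> c \<noteq> e \<and> {a, b} \<noteq> {c, e}}"
  define Coll :: "nat \<times> nat \<times> nat \<times> nat \<Rightarrow> (nat \<Rightarrow> bool list) set"
    where "Coll = (\<lambda>(a, b, c, e). {x. xor_bits (x a) (x b) = xor_bits (x c) (x e)})"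
  have Q_subset: "Q \<subseteq> {..<m} \<times> {..<m} \<times> {..<m} \<times> {..<m}" by (auto simp: Q_def)
  then have "finite Q" by (rule finite_subset) auto
  have "card Q \<le> m ^ 4"
    using card_mono[OF _ Q_subset] by (simp add: card_cartesian_product power4_eq_xxxx)
  have "{x. sum_collision m x} = (\<Union>q\<in>Q. Coll q)" unfolding sum_collision_def Q_def Coll_def by blast
  then have "measure_pmf.prob (unif_points d m) {x. sum_collision m x}
      \<le> (\<Sum>q\<in>Q. measure_pmf.prob (unif_points d m) (Coll q))"
    using measure_pmf.finite_measure_subadditive_finite[OF \<open>finite Q\<close>, of Coll] by simp
  also have "\<dots> \<le> (\<Sum>q\<in>Q. 1 / 2 ^ d)"
  proof (rule sum_mono)
    fix q assume "q \<in> Q"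
    then show "measure_pmf.prob (unif_points d m) (Coll q) \<le> 1 / 2 ^ d"
      unfolding Q_def Coll_def using measure_sum_collision_pair_le by (cases q) auto
  qed
  also have "\<dots> \<le> real m ^ 4 / 2 ^ d"
    using \<open>card Q \<le> m ^ 4\<close> by (simp add: divide_right_mono flip: of_nat_power)
  finally show ?thesis .
qed


section \<open>Disjoint pairs and their random selection\<close>

definition pairs_pass :: "(bool list \<Rightarrow> bool) \<Rightarrow> (nat \<Rightarrow> bool list) \<Rightarrow> (nat \<times> nat) list \<Rightarrow> bool" where
  "pairs_pass f x p \<longleftrightarrow> (\<forall>(a, b) \<in> set p. blr_passes f (x a) (x b))"

fun disjoint_pairs :: "nat set \<Rightarrow> (nat \<times> nat) list \<Rightarrow> bool" where
  "disjoint_pairs A [] = True"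
| "disjoint_pairs A ((a, b) # p) = (a \<in> A \<and> b \<in> A \<and> a \<noteq> b \<and> disjoint_pairs (A - {a, b}) p)"

lemma disjoint_pairs_subset: "disjoint_pairs A p \<Longrightarrow> (a, b) \<in> set p \<Longrightarrow> a \<in> A \<and> b \<in> A"
  by (induction A p rule: disjoint_pairs.induct) auto

definition blr_pass_prob :: "(bool list \<Rightarrow> bool) \<Rightarrow> nat \<Rightarrow> real" where
  "blr_pass_prob f d = measure_pmf.prob (pair_pmf (unif_cube d) (unif_cube d)) {(y, z). blr_passes f y z}"

lemma Pi_pmf_insert_insert:
  assumes "finite A" "a \<notin> A" "b \<notin> A" "a \<noteq> b"
  shows "Pi_pmf (insert a (insert b A)) dflt P =
    bind_pmf (Pi_pmf A dflt P) (\<lambda>g. map_pmf (\<lambda>(ya, yb). g(b := yb, a := ya)) (pair_pmf (P a) (P b)))"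
proof -
  have "Pi_pmf (insert a (insert b A)) dflt P =
      do {ya \<leftarrow> P a; yb \<leftarrow> P b; g \<leftarrow> Pi_pmf A dflt P; return_pmf (g(b := yb, a := ya))}"
    using assms by (simp add: Pi_pmf_insert' bind_assoc_pmf bind_return_pmf)
  also have "\<dots> = do {g \<leftarrow> Pi_pmf A dflt P; ya \<leftarrow> P a; yb \<leftarrow> P b; return_pmf (g(b := yb, a := ya))}"
    by (subst bind_commute_pmf) (subst (2) bind_commute_pmf, rule refl)
  also have "\<dots> = bind_pmf (Pi_pmf A dflt P) (\<lambda>g. map_pmf (\<lambda>(ya, yb). g(b := yb, a := ya)) (pair_pmf (P a) (P b)))"
    by (simp add: pair_pmf_def map_pmf_def bind_assoc_pmf bind_return_pmf)
  finally show ?thesis .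
qed

lemma pairs_pass_update_outside:
  assumes "\<And>u v. (u, v) \<in> set p \<Longrightarrow> u \<notin> {a, b} \<and> v \<notin> {a, b}"
  shows "pairs_pass f (g(b := yb, a := ya)) p = pairs_pass f g p"
  unfolding pairs_pass_def using assms by (fastforce intro!: ball_cong)

lemma measure_pairs_pass_le:
  assumes "finite A" "disjoint_pairs A p"
  shows "measure_pmf.prob (Pi_pmf A [] (\<lambda>_. unif_cube d)) {x. pairs_pass f x p} \<le> blr_pass_prob f d ^ length p"
  using assms
proof (induction p arbitrary: A)
  case Nil
  then show ?case by simp
next
  case (Cons ab p)
  obtain a b where ab: "ab = (a, b)" by force
  define A' where "A' = A - {a, b}"
  have p: "disjoint_pairs A' p" and "a \<in> A" "b \<in> A" "a \<noteq> b"
    using Cons.prems ab A'_def by auto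
  then have A: "A = insert a (insert b A')" by (auto simp: A'_def)
  have "finite A'" "a \<notin> A'" "b \<notin> A'" using Cons.prems by (auto simp: A'_def)
  have pass: "pairs_pass f (g(b := yb, a := ya)) (ab # p) = (blr_passes f ya yb \<and> pairs_pass f g p)"
    for g ya yb
    using disjoint_pairs_subset[OF p] \<open>a \<noteq> b\<close> pairs_pass_update_outside[of p a b]
    by (auto simp: ab A'_def pairs_pass_def)
  have "measure_pmf.prob (Pi_pmf A [] (\<lambda>_. unif_cube d)) {x. pairs_pass f x (ab # p)}
      \<le> blr_pass_prob f d * measure_pmf.prob (Pi_pmf A' [] (\<lambda>_. unif_cube d)) {g. pairs_pass f g p}"
    unfolding A Pi_pmf_insert_insert[OF \<open>finite A'\<close> \<open>a \<notin> A'\<close> \<open>b \<notin> A'\<close> \<open>a \<noteq> b\<close>]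
    by (rule measure_pmf_bind_le_mult)
      (auto simp: A'_def pass blr_pass_prob_def case_prod_unfold vimage_def)
  also have "\<dots> \<le> blr_pass_prob f d * blr_pass_prob f d ^ length p"
    using Cons.IH[OF \<open>finite A'\<close> p] by (simp add: blr_pass_prob_def mult_left_mono)
  finally show ?case by simp
qed

lemma pair_pmf_unif_cube: "pair_pmf (unif_cube d) (unif_cube d) = pmf_of_set (cube d \<times> cube d)"
proof (rule pmf_eqI)
  fix yz :: "bool list \<times> bool list"
  show "pmf (pair_pmf (unif_cube d) (unif_cube d)) yz = pmf (pmf_of_set (cube d \<times> cube d)) yz"
    by (cases yz) (simp add: unif_cube_def pmf_pair card_cartesian_product indicator_def)
qed

lemma blr_pass_prob_eq: "blr_pass_prob f d = 1 - real (card (blr_rejected f d)) / real (card (cube d)) ^ 2"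
proof -
  have "(cube d \<times> cube d) \<inter> {(y, z). blr_passes f y z} = (cube d \<times> cube d) - blr_rejected f d"
    unfolding blr_rejected_def by auto
  moreover have "card ((cube d \<times> cube d) - blr_rejected f d) = card (cube d \<times> cube d) - card (blr_rejected f d)"
    by (rule card_Diff_subset) (auto simp: blr_rejected_subset)
  moreover have "card (blr_rejected f d) \<le> card (cube d \<times> cube d)"
    by (rule card_mono) (auto simp: blr_rejected_subset)
  ultimately show ?thesis
    unfolding blr_pass_prob_def pair_pmf_unif_cube
    by (simp add: measure_pmf_of_set card_cartesian_product power2_eq_square of_nat_diff
        diff_divide_distrib card_cube)
qed


definition used_indices :: "(nat \<times> nat) list \<Rightarrow> nat set" where
  "used_indices p = fst ` set p \<union> snd ` set p"

definition free_pairs :: "nat \<Rightarrow> (nat \<times> nat) list \<Rightarrow> (nat \<times> nat) set" where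
  "free_pairs m p = {(a, b). a < m \<and> b < m \<and> a \<noteq> b \<and> a \<notin> used_indices p \<and> b \<notin> used_indices p}"

fun select_pairs :: "nat \<Rightarrow> nat \<Rightarrow> (nat \<times> nat) list pmf" where
  "select_pairs m 0 = return_pmf []"
| "select_pairs m (Suc k) =
     bind_pmf (select_pairs m k) (\<lambda>p. map_pmf (\<lambda>c. p @ [c]) (pmf_of_set (free_pairs m p)))"

lemma card_used_indices_le: "card (used_indices p) \<le> 2 * length p"
proof (induction p rule: rev_induct)
  case Nil
  then show ?case by (simp add: used_indices_def)
next
  case (snoc ab p)
  have "used_indices (p @ [ab]) = used_indices p \<union> {fst ab, snd ab}"
    by (auto simp: used_indices_def)
  moreover have "card (used_indices p \<union> {fst ab, snd ab}) \<le> card (used_indices p) + 2"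
    using card_Un_le[of "used_indices p" "{fst ab, snd ab}"] card_insert_le_m1[of 2 "{snd ab}" "fst ab"]
    by simp
  ultimately show ?case using snoc by simp
qed

lemma disjoint_pairs_snoc:
  "disjoint_pairs A (p @ [(a, b)]) \<longleftrightarrow>
     disjoint_pairs A p \<and> a \<in> A - used_indices p \<and> b \<in> A - used_indices p \<and> a \<noteq> b"
  by (induction A p rule: disjoint_pairs.induct) (auto simp: used_indices_def)

lemma finite_free_pairs [simp]: "finite (free_pairs m p)"
  by (rule finite_subset[of _ "{..<m} \<times> {..<m}"]) (auto simp: free_pairs_def)

lemma card_free_pairs_ge:
  "(m - 2 * length p) * (m - 2 * length p - 1) \<le> card (free_pairs m p)"
proof -
  define R where "R = {..<m} - used_indices p"
  have "m - 2 * length p \<le> card R"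
    using diff_card_le_card_Diff[of "used_indices p" "{..<m}"] card_used_indices_le[of p]
    by (simp add: R_def used_indices_def)
  have "finite R" by (simp add: R_def)
  have "card ((\<lambda>a. (a, a)) ` R) = card R" by (rule card_image) (simp add: inj_on_def)
  moreover have "free_pairs m p = (R \<times> R) - (\<lambda>a. (a, a)) ` R" by (auto simp: free_pairs_def R_def)
  ultimately have "card (free_pairs m p) = card R * card R - card R"
    using \<open>finite R\<close> by (simp add: card_Diff_subset card_cartesian_product image_subset_iff)
  also have "\<dots> = card R * (card R - 1)" by (simp add: diff_mult_distrib2)
  finally show ?thesis
    using \<open>m - 2 * length p \<le> card R\<close> by (simp add: mult_mono)
qed

lemma free_pairs_nonempty: "2 * length p + 2 \<le> m \<Longrightarrow> free_pairs m p \<noteq> {}"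
  using card_free_pairs_ge[of m p] by (intro notI) (simp add: mult_eq_0_iff)

lemma select_pairs_support:
  "2 * k \<le> m \<Longrightarrow> p \<in> set_pmf (select_pairs m k) \<Longrightarrow> length p = k \<and> disjoint_pairs {..<m} p"
proof (induction k arbitrary: p)
  case 0
  then show ?case by simp
next
  case (Suc k)
  then obtain q c where q: "q \<in> set_pmf (select_pairs m k)"
    and c: "c \<in> set_pmf (pmf_of_set (free_pairs m q))" and p: "p = q @ [c]"
    by auto
  have IH: "length q = k \<and> disjoint_pairs {..<m} q" using Suc q by simp
  then have "free_pairs m q \<noteq> {}" using Suc.prems by (intro free_pairs_nonempty) simp
  then have "c \<in> free_pairs m q" using c by simp
  then show ?case using IH p by (cases c) (auto simp: disjoint_pairs_snoc free_pairs_def)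
qed

lemma measure_select_pairs_bad_le:
  assumes "2 * n \<le> m"
    and "\<And>k q. k < n \<Longrightarrow> q \<in> set_pmf (select_pairs m k) \<Longrightarrow>
         measure_pmf.prob (pmf_of_set (free_pairs m q)) (F k q) \<le> \<beta> k"
  shows "measure_pmf.prob (select_pairs m n) {p. \<exists>k<n. p ! k \<in> F k (take k p)} \<le> (\<Sum>k<n. \<beta> k)"
  using assms
proof (induction n)
  case 0
  then show ?case by simp
next
  case (Suc n)
  obtain q0 where "q0 \<in> set_pmf (select_pairs m n)" using set_pmf_not_empty[of "select_pairs m n"] by blast
  then have "0 \<le> \<beta> n" using Suc.prems(2) measure_nonneg order_trans by blast
  have "measure_pmf.prob (select_pairs m (Suc n)) {p. \<exists>k<Suc n. p ! k \<in> F k (take k p)}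
     \<le> measure_pmf.prob (select_pairs m n) {p. \<exists>k<n. p ! k \<in> F k (take k p)} + \<beta> n"
    unfolding select_pairs.simps
  proof (rule measure_pmf_bind_le_add[OF _ \<open>0 \<le> \<beta> n\<close>])
    fix p assume p: "p \<in> set_pmf (select_pairs m n)" and good: "p \<notin> {p. \<exists>k<n. p ! k \<in> F k (take k p)}"
    have "length p = n" using select_pairs_support[OF _ p] Suc.prems by simp
    then have "(\<lambda>c. p @ [c]) -` {p. \<exists>k<Suc n. p ! k \<in> F k (take k p)} = F n p"
      using good by (auto simp: less_Suc_eq nth_append)
    then show "measure_pmf.prob (map_pmf (\<lambda>c. p @ [c]) (pmf_of_set (free_pairs m p)))
        {p. \<exists>k<Suc n. p ! k \<in> F k (take k p)} \<le> \<beta> n"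
      using Suc.prems(2)[OF _ p] by simp
  qed
  also have "\<dots> \<le> (\<Sum>k<n. \<beta> k) + \<beta> n"
    using Suc by simp
  finally show ?case by simp
qed


section \<open>The online-erasure oracle\<close>

fun erased_run :: "(bool list \<Rightarrow> bool) \<Rightarrow> adversary \<Rightarrow> bool list set \<Rightarrow>
    (bool list \<times> bool option) list \<Rightarrow> bool list list \<Rightarrow> bool list set" where
  "erased_run f adv E h [] = E"
| "erased_run f adv E h (q # qs) =
     (let a = (if q \<in> E then None else Some (f q));
          h' = h @ [(q, a)]
      in erased_run f adv (E \<union> adv h') h' qs)"

definition erased :: "(bool list \<Rightarrow> bool) \<Rightarrow> adversary \<Rightarrow> bool list list \<Rightarrow> bool list set" where
  "erased f adv qs = erased_run f adv {} [] qs"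

lemma oracle_run_nth:
  "j < length qs \<Longrightarrow> oracle_run f adv E h qs ! j =
     (if qs ! j \<in> erased_run f adv E h (take j qs) then None else Some (f (qs ! j)))"
proof (induction qs arbitrary: E h j)
  case Nil
  then show ?case by simp
next
  case (Cons q qs)
  then show ?case by (cases j) (simp_all add: Let_def)
qed

lemma answers_nth:
  "j < length qs \<Longrightarrow> answers f adv qs ! j =
     (if qs ! j \<in> erased f adv (take j qs) then None else Some (f (qs ! j)))"
  unfolding answers_def erased_def by (rule oracle_run_nth)

lemma card_erased_run_le:
  assumes "valid_adversary t adv" "finite E"
  shows "finite (erased_run f adv E h qs) \<and> card (erased_run f adv E h qs) \<le> card E + t * length qs"
  using assms(2)
proof (induction qs arbitrary: E h)
  case Nil
  then show ?case by simp
next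
  case (Cons q qs)
  define h' where "h' = h @ [(q, if q \<in> E then None else Some (f q))]"
  have "finite (adv h')" "card (adv h') \<le> t" using assms(1) unfolding valid_adversary_def by auto
  then have "finite (E \<union> adv h')" "card (E \<union> adv h') \<le> card E + t"
    using Cons.prems card_Un_le[of E "adv h'"] by auto
  moreover have "erased_run f adv E h (q # qs) = erased_run f adv (E \<union> adv h') h' qs"
    by (simp add: h'_def Let_def)
  ultimately show ?case using Cons.IH[of "E \<union> adv h'" h'] by simp
qed

lemma
  assumes "valid_adversary t adv"
  shows finite_erased: "finite (erased f adv qs)"
    and card_erased_le: "card (erased f adv qs) \<le> t * length qs"
  using card_erased_run_le[OF assms, of "{}" f "[]" qs] unfolding erased_def by simp_all


section \<open>The tester\<close>

definition pair_sum :: "(nat \<Rightarrow> bool list) \<Rightarrow> nat \<times> nat \<Rightarrow> bool list" where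
  "pair_sum x = (\<lambda>(a, b). xor_bits (x a) (x b))"

definition tester_queries :: "nat \<Rightarrow> (nat \<Rightarrow> bool list) \<Rightarrow> (nat \<times> nat) list \<Rightarrow> bool list list" where
  "tester_queries m x p = map x [0..<m] @ map (pair_sum x) p"

text \<open>Answer \<open>j < m\<close> is the value at \<open>x j\<close>; answer \<open>m + k\<close> is the value at the sum of the
  \<open>k\<close>-th pair.\<close>

definition tester_accepts :: "nat \<Rightarrow> (nat \<times> nat) list \<Rightarrow> bool option list \<Rightarrow> bool" where
  "tester_accepts m p ans \<longleftrightarrow> (\<forall>k<length p. case p ! k of (a, b) \<Rightarrow>
      (case (ans ! a, ans ! b, ans ! (m + k)) of (Some u, Some v, Some w) \<Rightarrow> (u \<noteq> v) = w | _ \<Rightarrow> True))"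

definition erased_sum_pairs ::
    "(bool list \<Rightarrow> bool) \<Rightarrow> adversary \<Rightarrow> nat \<Rightarrow> (nat \<Rightarrow> bool list) \<Rightarrow> (nat \<times> nat) list \<Rightarrow> (nat \<times> nat) set"
  where "erased_sum_pairs f adv m x q = {c. pair_sum x c \<in> erased f adv (tester_queries m x q)}"

lemma length_tester_queries: "length (tester_queries m x p) = m + length p"
  by (simp add: tester_queries_def)

lemma tester_queries_point:
  "j < m \<Longrightarrow> tester_queries m x p ! j = x j \<and> take j (tester_queries m x p) = map x [0..<j]"
  by (simp add: tester_queries_def nth_append take_map)

lemma tester_queries_sum:
  "k < length p \<Longrightarrow> tester_queries m x p ! (m + k) = pair_sum x (p ! k) \<and>
     take (m + k) (tester_queries m x p) = tester_queries m x (take k p)"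
  by (simp add: tester_queries_def nth_append take_map)

lemma tester_answer_point:
  "j < m \<Longrightarrow> answers f adv (tester_queries m x p) ! j =
     (if x j \<in> erased f adv (map x [0..<j]) then None else Some (f (x j)))"
  using answers_nth[of j] tester_queries_point[of j] by (simp add: length_tester_queries)

lemma tester_answer_sum:
  "k < length p \<Longrightarrow> answers f adv (tester_queries m x p) ! (m + k) =
     (if p ! k \<in> erased_sum_pairs f adv m x (take k p) then None else Some (f (pair_sum x (p ! k))))"
  using answers_nth[of "m + k"] tester_queries_sum[of k]
  by (simp add: length_tester_queries erased_sum_pairs_def)

lemma tester_accepts_cases:
  assumes "disjoint_pairs {..<m} p" and "tester_accepts m p (answers f adv (tester_queries m x p))"
  shows "pairs_pass f x p \<or> (\<exists>j<m. x j \<in> erased f adv (map x [0..<j])) \<or>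
         (\<exists>k<length p. p ! k \<in> erased_sum_pairs f adv m x (take k p))"
proof (rule ccontr)
  assume "\<not> ?thesis"
  then have "\<not> pairs_pass f x p" and points: "\<And>j. j < m \<Longrightarrow> x j \<notin> erased f adv (map x [0..<j])"
    and sums: "\<And>k. k < length p \<Longrightarrow> p ! k \<notin> erased_sum_pairs f adv m x (take k p)" by auto
  then obtain a b where ab: "(a, b) \<in> set p" "\<not> blr_passes f (x a) (x b)"
    unfolding pairs_pass_def by auto
  then obtain k where k: "k < length p" "p ! k = (a, b)" by (metis in_set_conv_nth)
  have "a < m" "b < m" using disjoint_pairs_subset[OF assms(1) ab(1)] by auto
  let ?ans = "answers f adv (tester_queries m x p)"
  have "?ans ! a = Some (f (x a))" "?ans ! b = Some (f (x b))"
    using \<open>a < m\<close> \<open>b < m\<close> points tester_answer_point by simp_all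
  moreover have "?ans ! (m + k) = Some (f (xor_bits (x a) (x b)))"
    using sums[OF k(1)] tester_answer_sum[OF k(1)] k(2) by (simp add: pair_sum_def)
  ultimately have "blr_passes f (x a) (x b)"
    using assms(2) k unfolding tester_accepts_def blr_passes_def by force
  then show False using ab by simp
qed

lemma tester_accepts_linear:
  assumes "is_linear_fn d f" and "\<And>j. j < m \<Longrightarrow> x j \<in> cube d" and "disjoint_pairs {..<m} p"
  shows "tester_accepts m p (answers f adv (tester_queries m x p))"
  unfolding tester_accepts_def
proof (intro allI impI)
  let ?ans = "answers f adv (tester_queries m x p)"
  fix k assume k: "k < length p"
  obtain a b where ab: "p ! k = (a, b)" by force
  then have "(a, b) \<in> set p" using k by (metis nth_mem)
  then have "a < m" "b < m" using disjoint_pairs_subset[OF assms(3)] by auto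
  moreover have "f (xor_bits (x a) (x b)) = (f (x a) \<noteq> f (x b))"
    using is_linear_fn_xor_bits[OF assms(1)] assms(2) calculation by blast
  moreover have "?ans ! a \<in> {None, Some (f (x a))}" "?ans ! b \<in> {None, Some (f (x b))}"
    using calculation(1,2) tester_answer_point by simp_all
  moreover have "?ans ! (m + k) \<in> {None, Some (f (xor_bits (x a) (x b)))}"
    using tester_answer_sum[OF k] ab by (simp add: pair_sum_def)
  ultimately show "case p ! k of (a, b) \<Rightarrow>
      (case (?ans ! a, ?ans ! b, ?ans ! (m + k)) of (Some u, Some v, Some w) \<Rightarrow> (u \<noteq> v) = w | _ \<Rightarrow> True)"
    using ab by auto
qed


lemma measure_tester_pairs_pass_le:
  assumes "2 * s \<le> m"
  shows "measure_pmf.prob (pair_pmf (unif_points d m) (select_pairs m s)) {(x, p). pairs_pass f x p}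
    \<le> blr_pass_prob f d ^ s"
  unfolding pair_pmf_conv_bind_right
proof (rule measure_pmf_bind_le)
  fix p assume "p \<in> set_pmf (select_pairs m s)"
  then have "length p = s" "disjoint_pairs {..<m} p" using select_pairs_support[OF assms] by auto
  then show "measure_pmf.prob (map_pmf (\<lambda>x. (x, p)) (unif_points d m)) {(x, p). pairs_pass f x p}
      \<le> blr_pass_prob f d ^ s"
    unfolding unif_points_def using measure_pairs_pass_le[of "{..<m}" p d f] by (simp add: vimage_def)
qed

lemma measure_tester_point_erased_le:
  assumes "valid_adversary t adv"
  shows "measure_pmf.prob (pair_pmf (unif_points d m) (select_pairs m s))
      {(x, p). \<exists>j<m. x j \<in> erased f adv (map x [0..<j])} \<le> real m * (real t * real m / 2 ^ d)"
proof -
  let ?Err = "\<lambda>j. {x. x j \<in> erased f adv (map x [0..<j])}"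
  have "measure_pmf.prob (pair_pmf (unif_points d m) (select_pairs m s))
      {(x, p). \<exists>j<m. x j \<in> erased f adv (map x [0..<j])} \<le> measure_pmf.prob (unif_points d m) (\<Union>j<m. ?Err j) + 0"
    unfolding pair_pmf_conv_bind_left by (rule measure_pmf_bind_le_add) (auto simp: vimage_def)
  also have "\<dots> \<le> (\<Sum>j<m. measure_pmf.prob (unif_points d m) (?Err j))"
    using measure_pmf.finite_measure_subadditive_finite[of "{..<m}" ?Err] by simp
  also have "\<dots> \<le> (\<Sum>j<m. real t * real m / 2 ^ d)"
  proof (rule sum_mono)
    fix j assume j: "j \<in> {..<m}"
    have "measure_pmf.prob (unif_points d m) (?Err j) \<le> real (t * j) / 2 ^ d"
    proof (rule measure_unif_points_fresh_le[where i = j and G = "\<lambda>x. erased f adv (map x [0..<j])"])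
      show "\<And>x y. (\<And>i. i \<noteq> j \<Longrightarrow> x i = y i) \<Longrightarrow> erased f adv (map x [0..<j]) = erased f adv (map y [0..<j])"
        by (metis (mono_tags, lifting) atLeastLessThan_iff less_irrefl_nat map_eq_conv set_upt)
      show "\<And>x. finite (erased f adv (map x [0..<j]))" by (rule finite_erased[OF assms])
      show "\<And>x. card (erased f adv (map x [0..<j])) \<le> t * j"
        using card_erased_le[OF assms] by (metis diff_zero length_map length_upt)
    qed (use j in auto)
    also have "\<dots> \<le> real t * real m / 2 ^ d"
      using j by (intro divide_right_mono) (simp_all add: mult_left_mono)
    finally show "measure_pmf.prob (unif_points d m) (?Err j) \<le> real t * real m / 2 ^ d" .
  qed
  finally show ?thesis by simp
qed

text \<open>Without sum collisions a pair is determined by its sum up to order.\<close>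

lemma card_free_erased_sum_pairs_le:
  assumes "valid_adversary t adv" and "t = 0 \<or> \<not> sum_collision m x"
  shows "card (free_pairs m q \<inter> erased_sum_pairs f adv m x q) \<le> 2 * (t * (m + length q))"
proof -
  let ?E = "erased f adv (tester_queries m x q)"
  have "finite ?E" and card_E: "card ?E \<le> t * (m + length q)"
    using finite_erased[OF assms(1)] card_erased_le[OF assms(1), of f "tester_queries m x q"]
    by (simp_all add: length_tester_queries)
  show ?thesis
  proof (cases "t = 0")
    case True
    then have "free_pairs m q \<inter> erased_sum_pairs f adv m x q = {}"
      using \<open>finite ?E\<close> card_E by (auto simp: erased_sum_pairs_def)
    then show ?thesis by simp
  next
    case False
    then have "\<not> sum_collision m x" using assms(2) by simp
    let ?code = "\<lambda>c. (pair_sum x c, fst c < snd c)"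
    have "inj_on ?code (free_pairs m q)"
    proof (rule inj_onI)
      fix c c' assume "c \<in> free_pairs m q" "c' \<in> free_pairs m q" "?code c = ?code c'"
      moreover obtain a b a' b' where "c = (a, b)" "c' = (a', b')" by force
      ultimately have free: "(a, b) \<in> free_pairs m q" "(a', b') \<in> free_pairs m q"
        and "pair_sum x (a, b) = pair_sum x (a', b')" "(a < b) = (a' < b')" by auto
      then have "xor_bits (x a) (x b) = xor_bits (x a') (x b')" by (simp add: pair_sum_def)
      moreover have "a < m" "b < m" "a \<noteq> b" "a' < m" "b' < m" "a' \<noteq> b'"
        using free by (auto simp: free_pairs_def)
      ultimately have "{a, b} = {a', b'}"
        using \<open>\<not> sum_collision m x\<close> unfolding sum_collision_def by blast
      then show "c = c'"
        using \<open>c = (a, b)\<close> \<open>c' = (a', b')\<close> \<open>(a < b) = (a' < b')\<close> \<open>a \<noteq> b\<close>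
        by (auto simp: doubleton_eq_iff)
    qed
    moreover have "?code ` (free_pairs m q \<inter> erased_sum_pairs f adv m x q) \<subseteq> ?E \<times> UNIV"
      by (auto simp: erased_sum_pairs_def)
    ultimately have "card (free_pairs m q \<inter> erased_sum_pairs f adv m x q) \<le> card (?E \<times> (UNIV :: bool set))"
      using \<open>finite ?E\<close> by (intro card_inj_on_le[where f = ?code]) (simp_all add: inj_on_Int)
    also have "\<dots> = 2 * card ?E" by (simp add: card_cartesian_product)
    finally show ?thesis using card_E by simp
  qed
qed

lemma card_free_pairs_ge_quarter:
  assumes "4 * s + 2 \<le> m" "length q < s"
  shows "m * m \<le> 4 * card (free_pairs m q)"
proof -
  define r where "r = m - 2 * length q"
  have "m + 2 \<le> 2 * r" using assms by (simp add: r_def)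
  then have "m * m \<le> (2 * r) * (2 * (r - 1))" by (intro mult_mono) auto
  also have "\<dots> = 4 * (r * (r - 1))" by simp
  also have "\<dots> \<le> 4 * card (free_pairs m q)"
    using card_free_pairs_ge[of m q] by (simp add: r_def)
  finally show ?thesis .
qed

lemma measure_free_erased_sum_pair_le:
  assumes "valid_adversary t adv" and "t = 0 \<or> \<not> sum_collision m x"
    and "4 * s + 2 \<le> m" and "length q < s"
  shows "measure_pmf.prob (pmf_of_set (free_pairs m q)) (erased_sum_pairs f adv m x q) \<le> 16 * real t / real m"
proof -
  define A where "A = card (free_pairs m q)"
  define B where "B = card (free_pairs m q \<inter> erased_sum_pairs f adv m x q)"
  have "free_pairs m q \<noteq> {}" using assms(3,4) by (intro free_pairs_nonempty) simp
  then have "0 < A" by (simp add: A_def card_gt_0_iff)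
  have "B \<le> 2 * (t * (m + length q))"
    unfolding B_def by (rule card_free_erased_sum_pairs_le[OF assms(1,2)])
  also have "\<dots> \<le> 2 * (t * (2 * m))" using assms(3,4) by (intro mult_left_mono) auto
  finally have "B \<le> 4 * t * m" by simp
  then have "B * m \<le> 4 * t * (m * m)" by (metis mult.assoc mult_le_mono1)
  also have "\<dots> \<le> 16 * t * A"
    using card_free_pairs_ge_quarter[OF assms(3,4)] by (simp add: A_def)
  finally have "real B * real m \<le> 16 * real t * real A"
    by (metis of_nat_le_iff of_nat_mult of_nat_numeral)
  moreover have "0 < m" using assms(3) by simp
  ultimately have "real B / real A \<le> 16 * real t / real m"
    using \<open>0 < A\<close> by (simp add: divide_simps mult.commute)
  then show ?thesis
    using \<open>free_pairs m q \<noteq> {}\<close> by (simp add: measure_pmf_of_set A_def B_def)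
qed

lemma measure_tester_sum_erased_le:
  assumes "valid_adversary t adv" and "4 * s + 2 \<le> m"
  shows "measure_pmf.prob (pair_pmf (unif_points d m) (select_pairs m s))
      {(x, p). \<exists>k<length p. p ! k \<in> erased_sum_pairs f adv m x (take k p)}
    \<le> measure_pmf.prob (unif_points d m) {x. t \<noteq> 0 \<and> sum_collision m x} + real s * (16 * real t / real m)"
  unfolding pair_pmf_conv_bind_left
proof (rule measure_pmf_bind_le_add)
  fix x assume "x \<notin> {x. t \<noteq> 0 \<and> sum_collision m x}"
  then have no_collision: "t = 0 \<or> \<not> sum_collision m x" by simp
  have "measure_pmf.prob (select_pairs m s) {p. \<exists>k<length p. p ! k \<in> erased_sum_pairs f adv m x (take k p)}
      \<le> measure_pmf.prob (select_pairs m s) {p. \<exists>k<s. p ! k \<in> erased_sum_pairs f adv m x (take k p)}"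
  proof (rule measure_pmf_mono_on_support)
    fix p assume "p \<in> set_pmf (select_pairs m s)"
    then have "length p = s" using select_pairs_support[of s m p] assms(2) by simp
    then show "p \<in> {p. \<exists>k<length p. p ! k \<in> erased_sum_pairs f adv m x (take k p)} \<Longrightarrow>
        p \<in> {p. \<exists>k<s. p ! k \<in> erased_sum_pairs f adv m x (take k p)}" by simp
  qed
  also have "\<dots> \<le> (\<Sum>k<s. 16 * real t / real m)"
  proof (rule measure_select_pairs_bad_le)
    fix k q assume "k < s" "q \<in> set_pmf (select_pairs m k)"
    then have "length q < s" using select_pairs_support[of k m q] assms(2) by simp
    then show "measure_pmf.prob (pmf_of_set (free_pairs m q)) (erased_sum_pairs f adv m x q) \<le> 16 * real t / real m"
      by (rule measure_free_erased_sum_pair_le[OF assms(1) no_collision assms(2)])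
  qed (use assms(2) in simp)
  finally show "measure_pmf.prob (map_pmf (Pair x) (select_pairs m s))
      {(x, p). \<exists>k<length p. p ! k \<in> erased_sum_pairs f adv m x (take k p)} \<le> real s * (16 * real t / real m)"
    by (simp add: vimage_def)
qed simp


lemma one_minus_power_le_exp:
  fixes \<eta> :: real
  assumes "\<eta> \<le> 1"
  shows "(1 - \<eta>) ^ s \<le> exp (- (real s * \<eta>))"
proof -
  have "(1 - \<eta>) ^ s \<le> exp (- \<eta>) ^ s"
    using assms exp_ge_add_one_self[of "- \<eta>"] by (intro power_mono) auto
  then show ?thesis by (simp add: exp_of_nat_mult[symmetric])
qed

lemma blr_pass_prob_power_le:
  assumes "eps_far_linear \<epsilon> d f" and "0 < \<epsilon>" "\<epsilon> \<le> 1" and "60 / \<epsilon> \<le> real s"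
  shows "blr_pass_prob f d ^ s \<le> 1 / 6"
proof -
  define N where "N = real (card (cube d))"
  define \<eta> where "\<eta> = real (card (blr_rejected f d)) / N ^ 2"
  have "0 < N" unfolding N_def by (simp add: card_cube)
  have "\<epsilon> / 12 * N ^ 2 \<le> real (card (blr_rejected f d))"
    unfolding N_def by (rule blr_card_rejected_ge[OF assms(1,3)])
  then have "\<epsilon> / 12 \<le> \<eta>" unfolding \<eta>_def using \<open>0 < N\<close> by (simp add: le_divide_eq)
  have "card (blr_rejected f d) \<le> card (cube d \<times> cube d)"
    by (rule card_mono) (auto simp: blr_rejected_subset)
  then have "real (card (blr_rejected f d)) \<le> N ^ 2"
    unfolding N_def by (metis card_cartesian_product of_nat_le_iff of_nat_mult power2_eq_square)
  then have "\<eta> \<le> 1" unfolding \<eta>_def using \<open>0 < N\<close> by (simp add: divide_le_eq)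
  have "5 = 60 / \<epsilon> * (\<epsilon> / 12)" using assms(2) by simp
  also have "\<dots> \<le> real s * \<eta>" using assms(2,4) \<open>\<epsilon> / 12 \<le> \<eta>\<close> by (intro mult_mono) auto
  finally have "5 \<le> real s * \<eta>" .
  have "(1 - \<eta>) ^ s \<le> exp (- (real s * \<eta>))" by (rule one_minus_power_le_exp) fact
  also have "\<dots> \<le> exp (- 5)" using \<open>5 \<le> real s * \<eta>\<close> by simp
  also have "\<dots> \<le> 1 / 6"
    using exp_ge_add_one_self[of 5] by (simp add: exp_minus field_simps)
  finally show ?thesis
    using blr_pass_prob_eq[of f d] unfolding \<eta>_def N_def by simp
qed


definition num_pairs :: "real \<Rightarrow> nat" where
  "num_pairs \<epsilon> = nat \<lceil>60 / \<epsilon>\<rceil>"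

definition num_points :: "nat \<Rightarrow> real \<Rightarrow> nat" where
  "num_points t \<epsilon> = 576 * max 1 t * num_pairs \<epsilon>"

definition linearity_tester :: "nat \<Rightarrow> nat \<Rightarrow> real \<Rightarrow> nonadaptive_alg" where
  "linearity_tester d t \<epsilon> =
     map_pmf (\<lambda>(x, p). (tester_queries (num_points t \<epsilon>) x p, tester_accepts (num_points t \<epsilon>) p))
       (pair_pmf (unif_points d (num_points t \<epsilon>)) (select_pairs (num_points t \<epsilon>) (num_pairs \<epsilon>)))"

lemma num_pairs_bounds:
  assumes "0 < \<epsilon>" "\<epsilon> \<le> 1"
  shows "1 \<le> num_pairs \<epsilon>" "60 / \<epsilon> \<le> real (num_pairs \<epsilon>)" "real (num_pairs \<epsilon>) \<le> 61 / \<epsilon>"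
proof -
  have "60 \<le> 60 / \<epsilon>" using assms by (simp add: field_simps)
  then have s: "real (num_pairs \<epsilon>) = real_of_int \<lceil>60 / \<epsilon>\<rceil>"
    by (simp add: num_pairs_def)
  then show "60 / \<epsilon> \<le> real (num_pairs \<epsilon>)" by simp
  then show "1 \<le> num_pairs \<epsilon>" using \<open>60 \<le> 60 / \<epsilon>\<close> by simp
  have "1 \<le> 1 / \<epsilon>" using assms by (simp add: field_simps)
  moreover have "61 / \<epsilon> = 60 / \<epsilon> + 1 / \<epsilon>" by (simp add: add_divide_distrib[symmetric])
  ultimately show "real (num_pairs \<epsilon>) \<le> 61 / \<epsilon>"
    using s of_int_ceiling_le_add_one[of "60 / \<epsilon>"] by linarith
qed

lemma num_points_ge: "4 * num_pairs \<epsilon> + 2 \<le> num_points t \<epsilon>" if "1 \<le> num_pairs \<epsilon>"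
proof -
  have "4 * num_pairs \<epsilon> + 2 \<le> 576 * num_pairs \<epsilon>" using that by simp
  also have "\<dots> \<le> 576 * (max 1 t * num_pairs \<epsilon>)" by simp
  finally show ?thesis by (simp add: num_points_def mult.assoc)
qed

text \<open>\<open>num_points t \<epsilon> \<le> 576 \<cdot> 61 \<cdot> t/\<epsilon>\<close>, and \<open>105408 = 3 \<cdot> 576 \<cdot> 61\<close>.\<close>

lemma num_points_fourth_power_le:
  assumes "0 < \<epsilon>" "\<epsilon> \<le> 1" "1 \<le> t" and "real t \<le> 1 / 105408 * \<epsilon> * 2 powr (real d / 4)"
  shows "real (num_points t \<epsilon>) ^ 4 \<le> 2 ^ d / 81"
proof -
  define Z where "Z = 2 powr (real d / 4)"
  have "real (num_points t \<epsilon>) = 576 * real t * real (num_pairs \<epsilon>)"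
    using assms(3) by (simp add: num_points_def max_def)
  also have "\<dots> \<le> 576 * real t * (61 / \<epsilon>)"
    using num_pairs_bounds[OF assms(1,2)] by (intro mult_left_mono) auto
  also have "\<dots> \<le> Z / 3"
    using assms(1,4) by (simp add: Z_def field_simps)
  finally have "real (num_points t \<epsilon>) ^ 4 \<le> (Z / 3) ^ 4" by (intro power_mono) auto
  also have "\<dots> = 2 ^ d / 81"
    by (simp add: Z_def power_divide powr_power powr_realpow)
  finally show ?thesis .
qed

lemma accept_prob_linearity_tester:
  "accept_prob (linearity_tester d t \<epsilon>) f adv =
     measure_pmf.prob (pair_pmf (unif_points d (num_points t \<epsilon>)) (select_pairs (num_points t \<epsilon>) (num_pairs \<epsilon>)))
       {(x, p). tester_accepts (num_points t \<epsilon>) p (answers f adv (tester_queries (num_points t \<epsilon>) x p))}"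
  unfolding accept_prob_def linearity_tester_def by (simp add: vimage_def case_prod_unfold)

lemma erasure_error_le:
  assumes "0 < \<epsilon>" "\<epsilon> \<le> 1" "1 \<le> t" and "real t \<le> 1 / 105408 * \<epsilon> * 2 powr (real d / 4)"
  defines "m \<equiv> num_points t \<epsilon>" and "s \<equiv> num_pairs \<epsilon>"
  shows "real m * (real t * real m / 2 ^ d) + real m ^ 4 / 2 ^ d + real s * (16 * real t / real m) \<le> 1 / 6"
proof -
  have m4: "real m ^ 4 \<le> 2 ^ d / 81"
    unfolding m_def by (rule num_points_fourth_power_le[OF assms(1-4)])
  have "1 \<le> s" using num_pairs_bounds[OF assms(1,2)] by (simp add: s_def)
  have m: "m = 576 * t * s" using assms(3) by (simp add: m_def s_def num_points_def max_def)
  then have "t \<le> m" "1 \<le> m" using \<open>1 \<le> s\<close> assms(3) by simp_all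
  then have "real t \<le> real m" "1 \<le> real m" by simp_all
  then have "real m * (real t * real m) \<le> real m ^ 4"
    by (simp add: power4_eq_xxxx mult_mono mult_le_cancel_left1)
  with m4 have "real m * (real t * real m / 2 ^ d) \<le> 1 / 81"
    by (simp add: divide_le_eq field_simps)
  moreover have "real m ^ 4 / 2 ^ d \<le> 1 / 81" using m4 by (simp add: divide_le_eq)
  moreover have "real s * (16 * real t / real m) = 1 / 36"
    using m \<open>1 \<le> s\<close> assms(3) by (simp add: field_simps)
  ultimately show ?thesis by linarith
qed

lemma linearity_tester_queries:
  assumes "0 < \<epsilon>" "\<epsilon> \<le> 1" and "(qs, dec) \<in> set_pmf (linearity_tester d t \<epsilon>)"
  shows "set qs \<subseteq> cube d \<and> real (length qs) \<le> 35197 * real (max 1 t) / \<epsilon>"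
proof -
  let ?m = "num_points t \<epsilon>" and ?s = "num_pairs \<epsilon>"
  obtain x p where x: "x \<in> set_pmf (unif_points d ?m)" and p: "p \<in> set_pmf (select_pairs ?m ?s)"
    and qs: "qs = tester_queries ?m x p"
    using assms(3) unfolding linearity_tester_def by auto
  have "1 \<le> ?s" "real ?s \<le> 61 / \<epsilon>" using num_pairs_bounds[OF assms(1,2)] by auto
  then have "length p = ?s" "disjoint_pairs {..<?m} p"
    using select_pairs_support[OF _ p] num_points_ge[of \<epsilon> t] by auto
  have "set qs \<subseteq> cube d"
  proof
    fix q assume "q \<in> set qs"
    then consider j where "j < ?m" "q = x j" | a b where "(a, b) \<in> set p" "q = xor_bits (x a) (x b)"
      unfolding qs tester_queries_def pair_sum_def by auto
    then show "q \<in> cube d"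
      using unif_points_in_cube[OF x] disjoint_pairs_subset[OF \<open>disjoint_pairs {..<?m} p\<close>]
      by cases auto
  qed
  moreover have "real (length qs) \<le> 35197 * real (max 1 t) / \<epsilon>"
  proof -
    have "length qs \<le> 577 * max 1 t * ?s"
      using \<open>length p = ?s\<close> by (simp add: qs length_tester_queries num_points_def)
    then have "real (length qs) \<le> 577 * real (max 1 t) * real ?s"
      by (metis of_nat_le_iff of_nat_mult of_nat_numeral)
    also have "\<dots> \<le> 577 * real (max 1 t) * (61 / \<epsilon>)"
      using \<open>real ?s \<le> 61 / \<epsilon>\<close> by (intro mult_left_mono) auto
    finally show ?thesis by simp
  qed
  ultimately show ?thesis by simp
qed

lemma linearity_tester_complete:
  assumes "is_linear_fn d f" and "0 < \<epsilon>" "\<epsilon> \<le> 1"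
  shows "accept_prob (linearity_tester d t \<epsilon>) f adv = 1"
proof -
  let ?m = "num_points t \<epsilon>" and ?s = "num_pairs \<epsilon>"
  let ?PP = "pair_pmf (unif_points d ?m) (select_pairs ?m ?s)"
  have "2 * ?s \<le> ?m" using num_pairs_bounds[OF assms(2,3)] num_points_ge[of \<epsilon> t] by simp
  have "AE xp in ?PP. tester_accepts ?m (snd xp) (answers f adv (tester_queries ?m (fst xp) (snd xp)))"
  proof (rule AE_pmfI)
    fix xp assume "xp \<in> set_pmf ?PP"
    then obtain x p where "xp = (x, p)" "x \<in> set_pmf (unif_points d ?m)" "p \<in> set_pmf (select_pairs ?m ?s)"
      by (cases xp) auto
    then show "tester_accepts ?m (snd xp) (answers f adv (tester_queries ?m (fst xp) (snd xp)))"
      using tester_accepts_linear[OF assms(1), of ?m x p adv] unif_points_in_cube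
        select_pairs_support[OF \<open>2 * ?s \<le> ?m\<close>] by simp
  qed
  then show ?thesis
    unfolding accept_prob_linearity_tester by (simp add: case_prod_unfold measure_pmf.prob_eq_1)
qed

lemma linearity_tester_sound:
  assumes "valid_adversary t adv" and "eps_far_linear \<epsilon> d f" and "0 < \<epsilon>" "\<epsilon> \<le> 1"
    and "real t \<le> 1 / 105408 * \<epsilon> * 2 powr (real d / 4)"
  shows "accept_prob (linearity_tester d t \<epsilon>) f adv \<le> 1 / 3"
proof -
  define m where "m = num_points t \<epsilon>"
  define s where "s = num_pairs \<epsilon>"
  have "4 * s + 2 \<le> m" using num_pairs_bounds[OF assms(3,4)] num_points_ge by (simp add: m_def s_def)
  let ?PP = "pair_pmf (unif_points d m) (select_pairs m s)"
  let ?Fail = "{(x, p). pairs_pass f x p}"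
  let ?PointErased = "{(x, p). \<exists>j<m. x j \<in> erased f adv (map x [0..<j])}"
  let ?SumErased = "{(x, p). \<exists>k<length p. p ! k \<in> erased_sum_pairs f adv m x (take k p)}"
  have "accept_prob (linearity_tester d t \<epsilon>) f adv
      = measure_pmf.prob ?PP {(x, p). tester_accepts m p (answers f adv (tester_queries m x p))}"
    unfolding accept_prob_linearity_tester m_def s_def ..
  also have "\<dots> \<le> measure_pmf.prob ?PP (?Fail \<union> ?PointErased \<union> ?SumErased)"
  proof (rule measure_pmf_mono_on_support)
    fix xp assume "xp \<in> set_pmf ?PP"
      and acc: "xp \<in> {(x, p). tester_accepts m p (answers f adv (tester_queries m x p))}"
    then obtain x p where xp: "xp = (x, p)" "p \<in> set_pmf (select_pairs m s)" by (cases xp) auto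
    then have "disjoint_pairs {..<m} p" using select_pairs_support[of s m p] \<open>4 * s + 2 \<le> m\<close> by simp
    then show "xp \<in> ?Fail \<union> ?PointErased \<union> ?SumErased"
      using tester_accepts_cases[of m p f adv x] acc xp by auto
  qed
  also have "\<dots> \<le> measure_pmf.prob ?PP ?Fail + measure_pmf.prob ?PP ?PointErased + measure_pmf.prob ?PP ?SumErased"
    using measure_Un_le[of "?Fail \<union> ?PointErased" ?PP ?SumErased] measure_Un_le[of ?Fail ?PP ?PointErased]
    by simp
  also have "\<dots> \<le> 1 / 6 + real m * (real t * real m / 2 ^ d) +
      (measure_pmf.prob (unif_points d m) {x. t \<noteq> 0 \<and> sum_collision m x} + real s * (16 * real t / real m))"
  proof -
    have "measure_pmf.prob ?PP ?Fail \<le> blr_pass_prob f d ^ s"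
      using \<open>4 * s + 2 \<le> m\<close> by (intro measure_tester_pairs_pass_le) simp
    also have "\<dots> \<le> 1 / 6"
      using blr_pass_prob_power_le[OF assms(2-4)] num_pairs_bounds[OF assms(3,4)] by (simp add: s_def)
    finally show ?thesis
      using measure_tester_point_erased_le[OF assms(1), of d m s f]
        measure_tester_sum_erased_le[OF assms(1) \<open>4 * s + 2 \<le> m\<close>, of d f] by linarith
  qed
  also have "\<dots> \<le> 1 / 3"
  proof (cases "t = 0")
    case False
    have "measure_pmf.prob (unif_points d m) {x. t \<noteq> 0 \<and> sum_collision m x} \<le> real m ^ 4 / 2 ^ d"
      using measure_sum_collision_le[of d m] False by simp
    moreover have "1 \<le> t" using False by simp
    ultimately show ?thesis
      using erasure_error_le[OF assms(3,4) _ assms(5), folded m_def s_def] by linarith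
  qed simp
  finally show ?thesis .
qed

theorem theoremB1:
  shows "\<exists>c0::real. 0 < c0 \<and> c0 < 1 \<and>
    (\<exists>C::real. \<exists>T :: nat \<Rightarrow> nat \<Rightarrow> real \<Rightarrow> nonadaptive_alg.
      \<forall>d t \<epsilon>. 0 < \<epsilon> \<and> \<epsilon> \<le> 1 \<longrightarrow>
        (\<forall>(qs, dec) \<in> set_pmf (T d t \<epsilon>).
            set qs \<subseteq> cube d \<and> real (length qs) \<le> C * real (max 1 t) / \<epsilon>) \<and>
        (real t \<le> c0 * \<epsilon> * 2 powr (real d / 4) \<longrightarrow>
          (\<forall>f adv. valid_adversary t adv \<longrightarrow>
             (is_linear_fn d f \<longrightarrow> accept_prob (T d t \<epsilon>) f adv = 1) \<and>
             (eps_far_linear \<epsilon> d f \<longrightarrow> accept_prob (T d t \<epsilon>) f adv \<le> 1 / 3))))"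
proof (rule exI[of _ "1 / 105408"], intro conjI exI[of _ 35197] exI[of _ linearity_tester] allI impI)
  fix d t and \<epsilon> :: real
  assume \<epsilon>: "0 < \<epsilon> \<and> \<epsilon> \<le> 1"
  show "\<forall>(qs, dec) \<in> set_pmf (linearity_tester d t \<epsilon>).
      set qs \<subseteq> cube d \<and> real (length qs) \<le> 35197 * real (max 1 t) / \<epsilon>"
    using linearity_tester_queries \<epsilon> by blast
  fix f adv
  assume "real t \<le> 1 / 105408 * \<epsilon> * 2 powr (real d / 4)" "valid_adversary t adv"
  then show "is_linear_fn d f \<Longrightarrow> accept_prob (linearity_tester d t \<epsilon>) f adv = 1"
    and "eps_far_linear \<epsilon> d f \<Longrightarrow> accept_prob (linearity_tester d t \<epsilon>) f adv \<le> 1 / 3"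
    using linearity_tester_complete linearity_tester_sound \<epsilon> by blast+
qed simp_all

end
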